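(* For all $m,n \in \mathbb{N}_0$, all words $v \in \mathbb{W}_m$ and $w \in \mathbb{W}_{m+n}$, \[ \mathbb{P}\{U_{m+n}= w \mid U_m= v\} = \binom{w}{v} \frac{n!\,n!}{(2m+1)(2m+2)\cdots(2(m+n))}. \]
   Context: For $n \in \mathbb{N}_0$, $\mathbb{W}_n$ denotes the set of words over the alphabet $\{a,b\}$ with exactly $n$ letters $a$ and $n$ letters $b$, and $\mathbb{W} := \bigsqcup_{n} \mathbb{W}_n$. For words $w,v$, $\binom{w}{v}$ denotes the number of occurrences of $v$ as a (not necessarily contiguous) sub-word of $w$, i.e. the number of strictly increasing maps $g:\{1,\dots,|v|\}\to\{1,\dots,|w|\}$ with $w_{g(k)}=v_k$ for all $k$. The Markov chain $(U_n)_{n\in\mathbb{N}_0}$ on $\mathbb{W}$ starts at $U_0=\emptyset$ (the empty word); given $U_n \in \mathbb{W}_n$, first a letter $a$ is inserted uniformly at random into one of the $2n+1$ slots of $U_n$, then a letter $b$ is inserted uniformly at random into one of the $2n+2$ slots of the resulting word, giving $U_{n+1}$. Equivalently, for $v\in\mathbb{W}_m$, $w\in\mathbb{W}_{m+1}$, $\mathbb{P}\{U_{m+1}=w\mid U_m=v\}=\binom{w}{v}/((2m+2)(2m+1))$. *)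

theory Defs
  imports "HOL-Probability.Probability"
begin

datatype letter = A | B

type_synonym word = "letter list"

definition W :: "nat \<Rightarrow> word set" where
  "W n = {w. length (filter (\<lambda>x. x = A) w) = n \<and> length (filter (\<lambda>x. x = B) w) = n}"

text \<open>Number of occurrences of v as a (not necessarily contiguous) subword of w:
  number of strictly increasing maps g from positions of v to positions of w
  with matching letters (0-indexed; g is fixed to 0 outside the domain so that
  maps are counted as functions on the domain only).\<close>
definition subword_count :: "word \<Rightarrow> word \<Rightarrow> nat" where
  "subword_count w v = card {g :: nat \<Rightarrow> nat.
      (\<forall>k < length v. g k < length w \<and> w ! (g k) = v ! k) \<and>
      (\<forall>k. Suc k < length v \<longrightarrow> g k < g (Suc k)) \<and>
      (\<forall>k. length v \<le> k \<longrightarrow> g k = 0)}"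

definition ins :: "nat \<Rightarrow> letter \<Rightarrow> word \<Rightarrow> word" where
  "ins i x w = take i w @ x # drop i w"

definition step :: "word \<Rightarrow> word pmf" where
  "step w = bind_pmf (pmf_of_set {0..length w}) (\<lambda>i.
             let w' = ins i A w in
             map_pmf (\<lambda>j. ins j B w') (pmf_of_set {0..length w'}))"

definition trans :: "nat \<Rightarrow> word \<Rightarrow> word pmf" where
  "trans n v = ((\<lambda>p. bind_pmf p step) ^^ n) (return_pmf v)"

definition U :: "nat \<Rightarrow> word pmf" where
  "U n = trans n []"

definition joint :: "nat \<Rightarrow> nat \<Rightarrow> (word \<times> word) pmf" where
  "joint m n = bind_pmf (U m) (\<lambda>v. map_pmf (\<lambda>w. (v, w)) (trans n v))"

definition cond_prob :: "nat \<Rightarrow> nat \<Rightarrow> word \<Rightarrow> word \<Rightarrow> real" where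
  "cond_prob m n v w = pmf (joint m n) (v, w) / pmf (U m) v"

end

theory Submission
  imports Defs "HOL-Combinatorics.Multiset_Permutations"
begin

text \<open>
  If w has one a and one b more than u, the number of
  pairs of slots producing w equals the number of occurrences of u in w, so a step goes from u to w
  with probability binom(w,u)/((2k+1)(2k+2)), where 2k is the length of u. The n-step formula
  follows by induction on n from the identity
    sum over u of binom(w,u) binom(u,v) = binom(w,v) * product over letters x of
    C(#x(w) - #x(v), #x(u) - #x(v)),
  the sum ranging over all words u with prescribed letter counts #x(u); for v in W m, u in
  W (m + n) and w in W (m + n + 1) the product is (n + 1)^2.
\<close>

fun subseq_count :: "'a list \<Rightarrow> 'a list \<Rightarrow> nat" where
  "subseq_count w [] = 1"
| "subseq_count [] (y # v) = 0"
| "subseq_count (x # w) (y # v) =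
     subseq_count w (y # v) + (if x = y then subseq_count w v else 0)"

lemma subseq_count_eq_0_if_longer: "length w < length v \<Longrightarrow> subseq_count w v = 0"
  by (induction w v rule: subseq_count.induct) auto

lemma subseq_count_same_length:
  "length w = length v \<Longrightarrow> subseq_count w v = (if w = v then 1 else 0)"
  by (induction w v rule: subseq_count.induct) (auto simp: subseq_count_eq_0_if_longer)

lemma mset_subseteq_if_subseq_count_nonzero:
  "subseq_count w v \<noteq> 0 \<Longrightarrow> mset v \<subseteq># mset w"
  by (induction w v rule: subseq_count.induct)
    (auto split: if_splits intro: subset_mset.trans subset_mset.less_imp_le dest: mset_subset_eq_insertD)

definition embeddings :: "'a list \<Rightarrow> 'a list \<Rightarrow> (nat \<Rightarrow> nat) set" where
  "embeddings w v = {g.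
      (\<forall>k < length v. g k < length w \<and> w ! (g k) = v ! k) \<and>
      (\<forall>k. Suc k < length v \<longrightarrow> g k < g (Suc k)) \<and>
      (\<forall>k. length v \<le> k \<longrightarrow> g k = 0)}"

lemma subword_count_eq_card_embeddings: "subword_count w v = card (embeddings w v)"
  by (simp add: subword_count_def embeddings_def)

definition shift_embedding :: "nat \<Rightarrow> (nat \<Rightarrow> nat) \<Rightarrow> nat \<Rightarrow> nat" where
  "shift_embedding L h = (\<lambda>k. if k < L then Suc (h k) else 0)"

definition cons_embedding :: "nat \<Rightarrow> (nat \<Rightarrow> nat) \<Rightarrow> nat \<Rightarrow> nat" where
  "cons_embedding L h = (\<lambda>k. case k of 0 \<Rightarrow> 0 | Suc k' \<Rightarrow> shift_embedding L h k')"

lemma embedding_gt_0: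
  assumes "g \<in> embeddings w v" "k < length v" "k \<noteq> 0 \<or> g 0 \<noteq> 0"
  shows "0 < g k"
proof (cases k)
  case (Suc k')
  then have "g k' < g k" using assms(1,2) by (auto simp: embeddings_def)
  then show ?thesis by simp
qed (use assms(3) in simp)

lemma embeddings_tail:
  "g \<in> embeddings w (y # v) \<Longrightarrow> (\<lambda>k. g (Suc k)) \<in> embeddings w v"
  by (auto simp: embeddings_def)

lemma unshift_mem_embeddings:
  assumes "g \<in> embeddings (x # w) v" "\<And>k. k < length v \<Longrightarrow> 0 < g k"
  shows "(\<lambda>k. if k < length v then g k - 1 else 0) \<in> embeddings w v"
  unfolding embeddings_def
proof (intro CollectI conjI allI impI)
  fix k assume k: "k < length v"
  have "g k < Suc (length w)" "(x # w) ! g k = v ! k" "0 < g k"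
    using assms k by (auto simp: embeddings_def)
  then show "(if k < length v then g k - 1 else 0) < length w"
    and "w ! (if k < length v then g k - 1 else 0) = v ! k"
    using k by (auto simp: nth_Cons')
next
  fix k assume k: "Suc k < length v"
  then have "g k < g (Suc k)" "0 < g k"
    using assms by (auto simp: embeddings_def)
  then show "(if k < length v then g k - 1 else 0) < (if Suc k < length v then g (Suc k) - 1 else 0)"
    using k by simp
qed simp

lemma bij_betw_shift_embedding:
  "bij_betw (shift_embedding (length (y # v))) (embeddings w (y # v))
     {g \<in> embeddings (x # w) (y # v). g 0 \<noteq> 0}"
proof (rule bij_betw_byWitness[where f' = "\<lambda>g k. if k < length (y # v) then g k - 1 else 0"])
  show "\<forall>h\<in>embeddings w (y # v).
          (\<lambda>k. if k < length (y # v) then shift_embedding (length (y # v)) h k - 1 else 0) = h"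
    by (auto simp: embeddings_def shift_embedding_def)
  show "shift_embedding (length (y # v)) ` embeddings w (y # v)
          \<subseteq> {g \<in> embeddings (x # w) (y # v). g 0 \<noteq> 0}"
    by (auto simp: embeddings_def shift_embedding_def)
  have pos: "0 < g k" if "g \<in> embeddings (x # w) (y # v)" "g 0 \<noteq> 0" "k < length (y # v)" for g k
    using embedding_gt_0 that by blast
  show "\<forall>g\<in>{g \<in> embeddings (x # w) (y # v). g 0 \<noteq> 0}.
          shift_embedding (length (y # v)) (\<lambda>k. if k < length (y # v) then g k - 1 else 0) = g"
  proof (intro ballI ext)
    fix g k assume g: "g \<in> {g \<in> embeddings (x # w) (y # v). g 0 \<noteq> 0}"
    show "shift_embedding (length (y # v)) (\<lambda>k. if k < length (y # v) then g k - 1 else 0) k = g k"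
      using g pos[of g k] by (auto simp: embeddings_def shift_embedding_def)
  qed
  show "(\<lambda>g k. if k < length (y # v) then g k - 1 else 0) ` {g \<in> embeddings (x # w) (y # v). g 0 \<noteq> 0}
          \<subseteq> embeddings w (y # v)"
  proof (rule image_subsetI)
    fix g assume "g \<in> {g \<in> embeddings (x # w) (y # v). g 0 \<noteq> 0}"
    with pos show "(\<lambda>k. if k < length (y # v) then g k - 1 else 0) \<in> embeddings w (y # v)"
      by (intro unshift_mem_embeddings) auto
  qed
qed

lemma bij_betw_cons_embedding:
  "bij_betw (cons_embedding (length v)) (embeddings w v)
     {g \<in> embeddings (x # w) (x # v). g 0 = 0}"
proof (rule bij_betw_byWitness[where f' = "\<lambda>g k. if k < length v then g (Suc k) - 1 else 0"])
  show "\<forall>h\<in>embeddings w v.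
          (\<lambda>k. if k < length v then cons_embedding (length v) h (Suc k) - 1 else 0) = h"
    by (auto simp: embeddings_def cons_embedding_def shift_embedding_def)
  show "cons_embedding (length v) ` embeddings w v \<subseteq> {g \<in> embeddings (x # w) (x # v). g 0 = 0}"
  proof (rule image_subsetI)
    fix h assume h: "h \<in> embeddings w v"
    have "cons_embedding (length v) h \<in> embeddings (x # w) (x # v)"
      unfolding embeddings_def
    proof (intro CollectI conjI allI impI)
      fix k assume "k < length (x # v)"
      then show "cons_embedding (length v) h k < length (x # w)"
        and "(x # w) ! cons_embedding (length v) h k = (x # v) ! k"
        using h by (cases k; auto simp: embeddings_def cons_embedding_def shift_embedding_def)+
    next
      fix k assume "Suc k < length (x # v)"
      then show "cons_embedding (length v) h k < cons_embedding (length v) h (Suc k)"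
        using h by (cases k) (auto simp: embeddings_def cons_embedding_def shift_embedding_def)
    qed (auto simp: cons_embedding_def shift_embedding_def split: nat.split)
    then show "cons_embedding (length v) h \<in> {g \<in> embeddings (x # w) (x # v). g 0 = 0}"
      by (simp add: cons_embedding_def)
  qed
  have pos: "0 < g (Suc k)" if "g \<in> embeddings (x # w) (x # v)" "k < length v" for g k
    using embedding_gt_0[of g "x # w" "x # v" "Suc k"] that by simp
  show "\<forall>g\<in>{g \<in> embeddings (x # w) (x # v). g 0 = 0}.
          cons_embedding (length v) (\<lambda>k. if k < length v then g (Suc k) - 1 else 0) = g"
  proof (intro ballI ext)
    fix g k assume g: "g \<in> {g \<in> embeddings (x # w) (x # v). g 0 = 0}"
    show "cons_embedding (length v) (\<lambda>k. if k < length v then g (Suc k) - 1 else 0) k = g k"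
      using g pos[of g "k - 1"]
      by (cases k) (auto simp: embeddings_def cons_embedding_def shift_embedding_def)
  qed
  show "(\<lambda>g k. if k < length v then g (Suc k) - 1 else 0) ` {g \<in> embeddings (x # w) (x # v). g 0 = 0}
          \<subseteq> embeddings w v"
  proof (rule image_subsetI)
    fix g assume "g \<in> {g \<in> embeddings (x # w) (x # v). g 0 = 0}"
    then have "(\<lambda>k. g (Suc k)) \<in> embeddings (x # w) v" "\<And>k. k < length v \<Longrightarrow> 0 < g (Suc k)"
      using pos embeddings_tail by auto
    then show "(\<lambda>k. if k < length v then g (Suc k) - 1 else 0) \<in> embeddings w v"
      by (rule unshift_mem_embeddings)
  qed
qed

lemma embeddings_Nil_right: "embeddings w [] = {\<lambda>_. 0}"
  by (auto simp: embeddings_def)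

lemma embeddings_Nil_left: "embeddings [] (y # v) = {}"
  by (auto simp: embeddings_def)

lemma embeddings_head_mismatch: "x \<noteq> y \<Longrightarrow> {g \<in> embeddings (x # w) (y # v). g 0 = 0} = {}"
  by (auto simp: embeddings_def)

text \<open>An embedding of y # v into x # w either maps the first letter to position 0, which
  requires x = y, or avoids position 0.\<close>

lemma finite_embeddings_card_eq_subseq_count:
  "finite (embeddings w v) \<and> card (embeddings w v) = subseq_count w v"
proof (induction w v rule: subseq_count.induct)
  case (3 x w y v)
  let ?E = "embeddings (x # w) (y # v)"
  let ?Z = "{g \<in> ?E. g 0 = 0}" and ?P = "{g \<in> ?E. g 0 \<noteq> 0}"
  have split: "?E = ?Z \<union> ?P" by auto
  have shift: "bij_betw (shift_embedding (length (y # v))) (embeddings w (y # v)) ?P"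
    by (rule bij_betw_shift_embedding)
  have shifted: "finite ?P \<and> card ?P = subseq_count w (y # v)"
    using 3 bij_betw_finite[OF shift] bij_betw_same_card[OF shift] by simp
  have headed: "finite ?Z \<and>
      card ?Z = (if x = y then subseq_count w v else 0)"
  proof (cases "x = y")
    case True
    have cons: "bij_betw (cons_embedding (length v)) (embeddings w v) ?Z"
      using True bij_betw_cons_embedding by simp
    show ?thesis
      using True 3 bij_betw_finite[OF cons] bij_betw_same_card[OF cons] by simp
  qed (simp add: embeddings_head_mismatch)
  have "?Z \<inter> ?P = {}" by auto
  with shifted headed show ?case
    by (subst (1 2) split) (simp add: card_Un_disjoint)
qed (simp_all add: embeddings_Nil_right embeddings_Nil_left)

lemma subword_count_eq_subseq_count: "subword_count w v = subseq_count w v"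
  by (simp add: subword_count_eq_card_embeddings finite_embeddings_card_eq_subseq_count)

text \<open>The number of ways to choose D from M when the copies of an element of M are
  distinguishable.\<close>

definition mset_choose :: "'a multiset \<Rightarrow> 'a multiset \<Rightarrow> nat" where
  "mset_choose M D = (\<Prod>x\<in>set_mset D. count M x choose count D x)"

lemma mset_choose_superset:
  assumes "finite S" "set_mset D \<subseteq> S"
  shows "mset_choose M D = (\<Prod>x\<in>S. count M x choose count D x)"
  unfolding mset_choose_def using assms by (intro prod.mono_neutral_left) (auto simp: not_in_iff)

lemma mset_choose_add_mset:
  "mset_choose (add_mset x M) D = mset_choose M D + (if x \<in># D then mset_choose M (D - {#x#}) else 0)"
proof (cases "x \<in># D")
  case False
  have "mset_choose (add_mset x M) D = mset_choose M D"
    unfolding mset_choose_def using False by (intro prod.cong) auto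
  with False show ?thesis
    by simp
next
  case True
  define R where "R = (\<Prod>y\<in>set_mset D - {x}. count M y choose count D y)"
  have remove_x: "(\<Prod>y\<in>set_mset D. g y) = g x * (\<Prod>y\<in>set_mset D - {x}. g y)" for g :: "'a \<Rightarrow> nat"
    using finite_set_mset True by (rule prod.remove)
  have "0 < count D x"
    using True by simp
  then obtain k where k: "count D x = Suc k"
    using gr0_implies_Suc by blast
  have "(\<Prod>y\<in>set_mset D - {x}. count (add_mset x M) y choose count D y) = R"
    unfolding R_def by (intro prod.cong) auto
  then have "mset_choose (add_mset x M) D = (Suc (count M x) choose Suc k) * R"
    unfolding mset_choose_def remove_x using k by simp
  moreover have "mset_choose M D = (count M x choose Suc k) * R"
    unfolding mset_choose_def remove_x R_def using k by simp
  moreover have "mset_choose M (D - {#x#}) = (count M x choose k) * R"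
  proof -
    have "mset_choose M (D - {#x#}) = (\<Prod>y\<in>set_mset D. count M y choose count (D - {#x#}) y)"
      by (rule mset_choose_superset) (auto dest: in_diffD)
    moreover have "(\<Prod>y\<in>set_mset D - {x}. count M y choose count (D - {#x#}) y) = R"
      unfolding R_def by (intro prod.cong) auto
    ultimately show ?thesis
      unfolding remove_x using k by simp
  qed
  ultimately show ?thesis
    using True by (simp add: algebra_simps)
qed

lemma sum_permutations_of_multiset_head:
  "(\<Sum>u\<in>permutations_of_multiset M. case u of [] \<Rightarrow> 0 | y # r \<Rightarrow> if y = x then f r else 0) =
     (if x \<in># M then \<Sum>r\<in>permutations_of_multiset (M - {#x#}). f r else (0 :: 'b :: comm_monoid_add))"
proof (cases "x \<in># M")
  case True
  have "(\<Sum>u\<in>permutations_of_multiset M. case u of [] \<Rightarrow> 0 | y # r \<Rightarrow> if y = x then f r else 0) =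
      (\<Sum>u\<in>(#) x ` permutations_of_multiset (M - {#x#}). case u of [] \<Rightarrow> 0 | y # r \<Rightarrow> if y = x then f r else 0)"
    using True
    by (intro sum.mono_neutral_right finite_permutations_of_multiset)
      (auto simp: permutations_of_multiset_def split: list.splits)
  also have "\<dots> = (\<Sum>r\<in>permutations_of_multiset (M - {#x#}). f r)"
    by (subst sum.reindex) auto
  finally show ?thesis
    using True by (simp only: if_True)
next
  case False
  then have "(\<Sum>u\<in>permutations_of_multiset M. case u of [] \<Rightarrow> 0 | y # r \<Rightarrow> if y = x then f r else 0) = 0"
    by (intro sum.neutral) (auto simp: permutations_of_multiset_def split: list.splits)
  with False show ?thesis
    by (simp only: if_False)
qed

lemma sum_subseq_count_Cons:
  "(\<Sum>u\<in>permutations_of_multiset M. subseq_count (x # w) u * subseq_count u v) =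
     (\<Sum>u\<in>permutations_of_multiset M. subseq_count w u * subseq_count u v) +
     (if x \<in># M then
        (\<Sum>u\<in>permutations_of_multiset (M - {#x#}). subseq_count w u * subseq_count u v) +
        (case v of [] \<Rightarrow> 0 | z # v' \<Rightarrow> if x = z then
           \<Sum>u\<in>permutations_of_multiset (M - {#x#}). subseq_count w u * subseq_count u v' else 0)
      else 0)"
proof -
  have "subseq_count (x # w) u * subseq_count u v = subseq_count w u * subseq_count u v +
      (case u of [] \<Rightarrow> 0 | y # r \<Rightarrow> if y = x then subseq_count w r * subseq_count (x # r) v else 0)" for u
    by (cases u) (auto simp: algebra_simps)
  then have "(\<Sum>u\<in>permutations_of_multiset M. subseq_count (x # w) u * subseq_count u v) =
      (\<Sum>u\<in>permutations_of_multiset M. subseq_count w u * subseq_count u v) +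
      (\<Sum>u\<in>permutations_of_multiset M.
        case u of [] \<Rightarrow> 0 | y # r \<Rightarrow> if y = x then subseq_count w r * subseq_count (x # r) v else 0)"
    by (simp only: sum.distrib)
  moreover have "(\<Sum>r\<in>permutations_of_multiset (M - {#x#}). subseq_count w r * subseq_count (x # r) v) =
      (\<Sum>u\<in>permutations_of_multiset (M - {#x#}). subseq_count w u * subseq_count u v) +
      (case v of [] \<Rightarrow> 0 | z # v' \<Rightarrow> if x = z then
         \<Sum>u\<in>permutations_of_multiset (M - {#x#}). subseq_count w u * subseq_count u v' else 0)"
  proof (cases v)
    case (Cons z v')
    then show ?thesis
      by (cases "x = z") (simp_all add: sum.distrib distrib_left)
  qed simp
  ultimately show ?thesis
    by (simp only: sum_permutations_of_multiset_head)
qed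

lemma sum_subseq_count_remove:
  assumes "x \<in># mset v + D"
  shows "(\<Sum>u\<in>permutations_of_multiset (mset v + D - {#x#}). f u * subseq_count u v) =
    (if x \<in># D then \<Sum>u\<in>permutations_of_multiset (mset v + (D - {#x#})). f u * subseq_count u v else 0)"
proof (cases "x \<in># D")
  case True
  then have "mset v + D - {#x#} = mset v + (D - {#x#})"
    by (intro multiset_diff_union_assoc) simp
  with True show ?thesis
    by (simp only: if_True)
next
  case False
  have "\<not> mset v \<subseteq># mset v + D - {#x#}"
  proof
    assume "mset v \<subseteq># mset v + D - {#x#}"
    then have "count (mset v) x \<le> count (mset v + D - {#x#}) x"
      by (rule mset_subset_eq_count)
    moreover have "count (mset v + D - {#x#}) x = count (mset v) x - 1"
      using False by (simp add: not_in_iff)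
    moreover have "0 < count (mset v) x"
      using assms False by simp
    ultimately show False
      by linarith
  qed
  then have "subseq_count u v = 0" if "u \<in> permutations_of_multiset (mset v + D - {#x#})" for u
    using permutations_of_multisetD[OF that] mset_subseteq_if_subseq_count_nonzero by metis
  with False show ?thesis
    by simp
qed

lemma subseq_count_mult_mset_choose_Cons:
  "subseq_count w v * mset_choose (mset w - mset v) D +
     (if x \<in># D then subseq_count w v * mset_choose (mset w - mset v) (D - {#x#}) else 0) =
   subseq_count w v * mset_choose (mset (x # w) - mset v) D"
proof (cases "subseq_count w v = 0")
  case False
  then have "mset (x # w) - mset v = add_mset x (mset w - mset v)"
    using mset_subseteq_if_subseq_count_nonzero[OF False]
    by (auto simp: multiset_eq_iff subseteq_mset_def Suc_diff_le)
  then show ?thesis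
    by (simp add: mset_choose_add_mset algebra_simps)
qed simp

text \<open>Summing over all words u with prescribed letter counts: an occurrence of u in w
  together with an occurrence of v in u is the same as an occurrence of v in w together with a
  choice, letter by letter, of the additional positions of u among the unused positions of w.\<close>

lemma sum_subseq_count_chain:
  "(\<Sum>u\<in>permutations_of_multiset (mset v + D). subseq_count w u * subseq_count u v) =
     subseq_count w v * mset_choose (mset w - mset v) D"
proof (induction w arbitrary: v D)
  case Nil
  have "subseq_count [] u * subseq_count u v = (if u = [] then subseq_count [] v else 0)" for u
    by (cases u) auto
  then have "(\<Sum>u\<in>permutations_of_multiset (mset v + D). subseq_count [] u * subseq_count u v) =
      (if v = [] \<and> D = {#} then 1 else 0)"
    by simp (simp add: permutations_of_multiset_def)
  then show ?case
    by (cases v) (auto simp: mset_choose_def)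
next
  case (Cons x w)
  let ?M = "mset v + D" and ?m = "mset_choose (mset (x # w) - mset v) D"
  have head_terms: "(if x \<in># ?M then
        (\<Sum>u\<in>permutations_of_multiset (?M - {#x#}). subseq_count w u * subseq_count u v) +
        (case v of [] \<Rightarrow> 0 | z # v' \<Rightarrow> if x = z then
           \<Sum>u\<in>permutations_of_multiset (?M - {#x#}). subseq_count w u * subseq_count u v' else 0)
      else 0) =
      (if x \<in># D then subseq_count w v * mset_choose (mset w - mset v) (D - {#x#}) else 0) +
      (case v of [] \<Rightarrow> 0 | z # v' \<Rightarrow> if x = z then subseq_count w v' * ?m else 0)"
  proof (cases "x \<in># ?M")
    case True
    have "(case v of [] \<Rightarrow> 0 | z # v' \<Rightarrow> if x = z then
           \<Sum>u\<in>permutations_of_multiset (?M - {#x#}). subseq_count w u * subseq_count u v' else 0) =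
        (case v of [] \<Rightarrow> 0 | z # v' \<Rightarrow> if x = z then subseq_count w v' * ?m else 0)"
      using Cons.IH by (auto split: list.split)
    with True show ?thesis
      by (simp only: sum_subseq_count_remove if_True Cons.IH)
  next
    case False
    then have "x \<notin># D" "x \<notin> set v"
      by simp_all
    then show ?thesis
      using False by (cases v) auto
  qed
  have head: "subseq_count w v * m +
      (case v of [] \<Rightarrow> 0 | z # v' \<Rightarrow> if x = z then subseq_count w v' * m else 0) =
      subseq_count (x # w) v * m" for m :: nat
    by (cases v) (simp_all add: distrib_right)
  show ?case
    by (simp only: sum_subseq_count_Cons Cons.IH head_terms add.assoc[symmetric]
        subseq_count_mult_mset_choose_Cons head)
qed

lemma mset_ins: "mset (ins i x u) = add_mset x (mset u)"
proof -
  have "mset u = mset (take i u) + mset (drop i u)"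
    by (simp flip: mset_append)
  then show ?thesis
    by (simp add: ins_def)
qed

lemma length_ins: "i \<le> length u \<Longrightarrow> length (ins i x u) = Suc (length u)"
  by (simp add: ins_def)

lemma card_filter_atLeast0_atMost_Suc:
  "card {i \<in> {0..Suc n}. P i} = (if P 0 then 1 else 0) + card {i \<in> {0..n}. P (Suc i)}"
proof -
  have "{i \<in> {0..Suc n}. P i} = {i. i = 0 \<and> P 0} \<union> Suc ` {i \<in> {0..n}. P (Suc i)}"
  proof (intro set_eqI iffI)
    fix i assume "i \<in> {i \<in> {0..Suc n}. P i}"
    then show "i \<in> {i. i = 0 \<and> P 0} \<union> Suc ` {i \<in> {0..n}. P (Suc i)}"
      by (cases i) auto
  qed auto
  moreover have "card (Suc ` {i \<in> {0..n}. P (Suc i)}) = card {i \<in> {0..n}. P (Suc i)}"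
    by (simp add: card_image)
  ultimately show ?thesis
    by (simp add: card_Un_disjoint)
qed

text \<open>If w has exactly one letter x more than u, an occurrence of u in w is determined by the
  one position of w it leaves out, which is where x was inserted.\<close>

lemma card_ins_eq_subseq_count:
  assumes "mset w = add_mset x (mset u)"
  shows "card {i \<in> {0..length u}. ins i x u = w} = subseq_count w u"
  using assms
proof (induction u arbitrary: w)
  case Nil
  then show ?case
    by (simp add: ins_def)
next
  case (Cons y u)
  obtain z w' where w: "w = z # w'"
    using Cons.prems by (cases w) auto
  have "card {i \<in> {0..length (y # u)}. ins i x (y # u) = w} =
      (if x # y # u = w then 1 else 0) + card {i \<in> {0..length u}. y # ins i x u = w}"
    using card_filter_atLeast0_atMost_Suc[of "length u" "\<lambda>i. ins i x (y # u) = w"]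
    by (simp add: ins_def)
  also have "card {i \<in> {0..length u}. y # ins i x u = w} = (if z = y then subseq_count w' u else 0)"
  proof (cases "z = y")
    case True
    then have "mset w' = add_mset x (mset u)"
      using Cons.prems w by (simp add: add_mset_commute)
    then show ?thesis
      using Cons.IH[of w'] w True by simp
  qed (simp add: w)
  also have "(if x # y # u = w then 1 else 0) = subseq_count w' (y # u)"
  proof -
    have "length w' = length (y # u)"
      using arg_cong[OF Cons.prems, of size] w by simp
    moreover have "z = x" if "w' = y # u"
      using Cons.prems w that by simp
    ultimately show ?thesis
      using w by (auto simp: subseq_count_same_length)
  qed
  finally show ?case
    using w by simp
qed

lemma sum_subseq_count_ins:
  "(\<Sum>i\<in>{0..length u}. subseq_count w (ins i x u)) = subseq_count w u * count (mset w - mset u) x"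
proof -
  let ?P = "permutations_of_multiset (mset u + {#x#})"
  have "(\<Sum>i\<in>{0..length u}. subseq_count w (ins i x u)) =
      (\<Sum>u'\<in>?P. \<Sum>i\<in>{i \<in> {0..length u}. ins i x u = u'}. subseq_count w (ins i x u))"
    by (rule sum.group[symmetric]) (auto intro: permutations_of_multisetI simp: mset_ins)
  also have "\<dots> = (\<Sum>u'\<in>?P. subseq_count w u' * subseq_count u' u)"
  proof (rule sum.cong[OF refl])
    fix u' assume "u' \<in> ?P"
    then have "card {i \<in> {0..length u}. ins i x u = u'} = subseq_count u' u"
      by (intro card_ins_eq_subseq_count) (simp add: permutations_of_multiset_def)
    then show "(\<Sum>i\<in>{i \<in> {0..length u}. ins i x u = u'}. subseq_count w (ins i x u)) =
        subseq_count w u' * subseq_count u' u"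
      by simp
  qed
  also have "\<dots> = subseq_count w u * mset_choose (mset w - mset u) {#x#}"
    by (rule sum_subseq_count_chain)
  finally show ?thesis
    by (simp add: mset_choose_def)
qed

lemma pmf_map_pmf_of_set:
  assumes "finite S" "S \<noteq> {}"
  shows "pmf (map_pmf f (pmf_of_set S)) y = card {x \<in> S. f x = y} / card S"
proof -
  have "pmf (map_pmf f (pmf_of_set S)) y = measure (pmf_of_set S) (f -` {y})"
    by (rule pmf_map)
  also have "\<dots> = card (S \<inter> f -` {y}) / card S"
    using assms by (simp add: measure_pmf_of_set)
  finally show ?thesis
    by (simp add: Int_def vimage_def conj_commute)
qed

lemma pmf_step:
  assumes "mset w = add_mset A (add_mset B (mset u))"
  shows "pmf (step u) w = subseq_count w u / ((length u + 1) * (length u + 2))"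
proof -
  let ?L = "length u"
  have insert_B: "pmf (map_pmf (\<lambda>j. ins j B (ins i A u)) (pmf_of_set {0..length (ins i A u)})) w =
      subseq_count w (ins i A u) / (?L + 2)" if "i \<in> {0..?L}" for i
  proof -
    have "mset w = add_mset B (mset (ins i A u))"
      using assms by (simp add: mset_ins add_mset_commute)
    then have "card {j \<in> {0..length (ins i A u)}. ins j B (ins i A u) = w} = subseq_count w (ins i A u)"
      by (rule card_ins_eq_subseq_count)
    then show ?thesis
      using that by (simp add: pmf_map_pmf_of_set length_ins)
  qed
  have "pmf (step u) w =
      (\<Sum>i\<in>{0..?L}. pmf (map_pmf (\<lambda>j. ins j B (ins i A u)) (pmf_of_set {0..length (ins i A u)})) w) /
      (?L + 1)"
    unfolding step_def Let_def by (subst pmf_bind_pmf_of_set) auto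
  also have "\<dots> = (\<Sum>i\<in>{0..?L}. real (subseq_count w (ins i A u))) / (?L + 2) / (?L + 1)"
    by (simp add: insert_B sum_divide_distrib)
  also have "\<dots> = (\<Sum>i\<in>{0..?L}. real (subseq_count w (ins i A u))) / ((?L + 1) * (?L + 2))"
    by (simp add: divide_divide_eq_left algebra_simps)
  also have "(\<Sum>i\<in>{0..?L}. real (subseq_count w (ins i A u))) = subseq_count w u"
    using sum_subseq_count_ins[where x = A and u = u and w = w] assms by (simp flip: of_nat_sum)
  finally show ?thesis .
qed

lemma W_iff_mset: "u \<in> W n \<longleftrightarrow> mset u = replicate_mset n A + replicate_mset n B"
proof -
  have count_u: "count (mset u) y = length (filter (\<lambda>x. x = y) u)" for y
    by (induction u) auto
  show ?thesis
  proof
    assume "u \<in> W n"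
    show "mset u = replicate_mset n A + replicate_mset n B"
    proof (rule multiset_eqI)
      fix y
      show "count (mset u) y = count (replicate_mset n A + replicate_mset n B) y"
        using \<open>u \<in> W n\<close> by (cases y) (simp_all add: W_def count_u)
    qed
  next
    assume "mset u = replicate_mset n A + replicate_mset n B"
    then show "u \<in> W n"
      unfolding W_def using count_u[of A] count_u[of B] by simp
  qed
qed

lemma W_eq_permutations_of_multiset:
  "W n = permutations_of_multiset (replicate_mset n A + replicate_mset n B)"
  by (auto simp: W_iff_mset permutations_of_multiset_def)

lemma length_W: "u \<in> W n \<Longrightarrow> length u = 2 * n"
  by (metis W_iff_mset size_mset size_union size_replicate_mset mult_2)

lemma trans_Suc: "trans (Suc n) v = bind_pmf (trans n v) step"
  by (simp add: trans_def)

lemma set_pmf_step: "set_pmf (step u) \<subseteq> {w. mset w = add_mset A (add_mset B (mset u))}"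
  unfolding step_def Let_def by (auto simp: set_pmf_of_set mset_ins)

lemma set_pmf_trans: "v \<in> W m \<Longrightarrow> set_pmf (trans n v) \<subseteq> W (m + n)"
proof (induction n)
  case 0
  then show ?case
    by (simp add: trans_def)
next
  case (Suc n)
  then show ?case
    using set_pmf_step by (fastforce simp: trans_Suc W_iff_mset)
qed

lemma sum_subseq_count_W:
  assumes "v \<in> W m" "w \<in> W (m + Suc n)"
  shows "(\<Sum>u\<in>W (m + n). subseq_count w u * subseq_count u v) = subseq_count w v * (Suc n * Suc n)"
proof -
  let ?D = "replicate_mset n A + replicate_mset n B"
  have "mset v + ?D = replicate_mset (m + n) A + replicate_mset (m + n) B"
    using assms(1) by (simp add: W_iff_mset multiset_eq_iff)
  then have "W (m + n) = permutations_of_multiset (mset v + ?D)"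
    by (simp add: W_eq_permutations_of_multiset)
  moreover have "mset w - mset v = replicate_mset (Suc n) A + replicate_mset (Suc n) B"
    using assms by (simp add: W_iff_mset multiset_eq_iff)
  moreover have "mset_choose (replicate_mset (Suc n) A + replicate_mset (Suc n) B) ?D = Suc n * Suc n"
    by (subst mset_choose_superset[where S = "{A, B}"]) auto
  ultimately show ?thesis
    by (simp add: sum_subseq_count_chain)
qed

lemma pmf_trans:
  assumes "v \<in> W m" "w \<in> W (m + n)"
  shows "pmf (trans n v) w =
    real (subseq_count w v) * (fact n * fact n) / (\<Prod>k = 2*m+1..2*(m+n). real k)"
  using assms(2)
proof (induction n arbitrary: w)
  case 0
  then have "length w = length v"
    using assms(1) by (simp add: length_W)
  then show ?case
    by (simp add: trans_def subseq_count_same_length indicator_def)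
next
  case (Suc n)
  let ?L = "2 * (m + n)" and ?P = "\<Prod>k = 2*m+1..2*(m+n). real k"
  have "pmf (trans (Suc n) v) w = (\<Sum>u\<in>W (m + n). pmf (step u) w * pmf (trans n v) u)"
    unfolding trans_Suc pmf_bind using set_pmf_trans[OF assms(1)]
    by (intro integral_measure_pmf_real) (auto simp: W_eq_permutations_of_multiset)
  also have "\<dots> = (\<Sum>u\<in>W (m + n). real (subseq_count w u * subseq_count u v)) *
      (fact n * fact n) / (?P * ((?L + 1) * (?L + 2)))"
  proof -
    have "pmf (step u) w * pmf (trans n v) u = real (subseq_count w u * subseq_count u v) *
        (fact n * fact n) / (?P * ((?L + 1) * (?L + 2)))" if "u \<in> W (m + n)" for u
    proof -
      have "mset w = add_mset A (add_mset B (mset u))"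
        using that Suc.prems by (simp add: W_iff_mset)
      then show ?thesis
        using Suc.IH[OF that] length_W[OF that] by (simp add: pmf_step ac_simps)
    qed
    then show ?thesis
      by (simp add: sum_distrib_right sum_divide_distrib)
  qed
  also have "\<dots> = real (subseq_count w v) * (fact (Suc n) * fact (Suc n)) / (\<Prod>k = 2*m+1..2*(m + Suc n). real k)"
  proof -
    have "(\<Prod>k = 2*m+1..2*(m + Suc n). real k) = ?P * ((?L + 1) * (?L + 2))"
      by (simp add: prod.cl_ivl_Suc algebra_simps)
    moreover have "(\<Sum>u\<in>W (m + n). real (subseq_count w u * subseq_count u v)) =
        real (subseq_count w v) * (Suc n * Suc n)"
      by (simp only: sum_subseq_count_W[OF assms(1) Suc.prems] flip: of_nat_sum of_nat_mult)
    ultimately show ?thesis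
      by (simp only: fact_Suc of_nat_mult ac_simps)
  qed
  finally show ?case .
qed

lemma pmf_joint: "pmf (joint m n) (v, w) = pmf (U m) v * pmf (trans n v) w"
proof -
  have "pmf (joint m n) (v, w) = (\<Sum>v'\<in>{v}. pmf (map_pmf (Pair v') (trans n v')) (v, w) * pmf (U m) v')"
    unfolding joint_def pmf_bind
    by (rule integral_measure_pmf_real) (auto simp flip: set_pmf_iff)
  moreover have "pmf (map_pmf (Pair v) (trans n v)) (v, w) = pmf (trans n v) w"
    by (rule pmf_map_inj') (auto simp: inj_def)
  ultimately show ?thesis
    by simp
qed

theorem mainTheorem1:
  fixes m n :: nat and v w :: word
  assumes "v \<in> W m" and "w \<in> W (m + n)"
  shows "cond_prob m n v w =
    real (subword_count w v) * (fact n * fact n) / (\<Prod>k = 2*m+1..2*(m+n). real k)"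
proof -
  have "[] \<in> W 0"
    by (simp add: W_def)
  then have "pmf (U m) v = real (subseq_count v []) * (fact m * fact m) / (\<Prod>k = 1..2*m. real k)"
    using assms(1) pmf_trans[of "[]" 0 v m] by (simp add: U_def)
  moreover have "0 < (\<Prod>k = 1..2*m. real k)"
    by (rule prod_pos) auto
  ultimately have "pmf (U m) v > 0"
    by simp
  then have "cond_prob m n v w = pmf (trans n v) w"
    by (simp add: cond_prob_def pmf_joint)
  then show ?thesis
    using pmf_trans[OF assms] by (simp add: subword_count_eq_subseq_count)
qed

end
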